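(* Let $x,y,z$ be nodes of a finite, connected, unweighted, undirected graph, and suppose some node $c$ is a Condorcet winner for $\{x,y,z\}$. Then $c$ lies on a shortest path between $x$ and $y$, on a shortest path between $x$ and $z$, and on a shortest path between $y$ and $z$.
   Context: $d$ is the shortest-path distance. A node $c$ is a Condorcet winner for a set $S$ if for every other node $y'$, $\lvert\{u\in S: d(u,c)<d(u,y')\}\rvert > \lvert\{u\in S: d(u,y')<d(u,c)\}\rvert$. *)

theory Defs
  imports Main
begin

definition graph :: "'a set \<Rightarrow> ('a \<Rightarrow> 'a \<Rightarrow> bool) \<Rightarrow> bool" where
  "graph V E \<longleftrightarrow> finite V \<and> (\<forall>u v. E u v \<longrightarrow> u \<in> V \<and> v \<in> V)
     \<and> (\<forall>u v. E u v \<longrightarrow> E v u) \<and> (\<forall>u. \<not> E u u)"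

text \<open>A walk from u to v given as the list of its vertices; its length is length p - 1.\<close>
definition is_path :: "'a set \<Rightarrow> ('a \<Rightarrow> 'a \<Rightarrow> bool) \<Rightarrow> 'a list \<Rightarrow> 'a \<Rightarrow> 'a \<Rightarrow> bool" where
  "is_path V E p u v \<longleftrightarrow> p \<noteq> [] \<and> hd p = u \<and> last p = v \<and> set p \<subseteq> V
     \<and> (\<forall>i. Suc i < length p \<longrightarrow> E (p ! i) (p ! Suc i))"

definition connected_graph :: "'a set \<Rightarrow> ('a \<Rightarrow> 'a \<Rightarrow> bool) \<Rightarrow> bool" where
  "connected_graph V E \<longleftrightarrow> (\<forall>u\<in>V. \<forall>v\<in>V. \<exists>p. is_path V E p u v)"

definition gdist :: "'a set \<Rightarrow> ('a \<Rightarrow> 'a \<Rightarrow> bool) \<Rightarrow> 'a \<Rightarrow> 'a \<Rightarrow> nat" where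
  "gdist V E u v = (LEAST n. \<exists>p. is_path V E p u v \<and> length p = Suc n)"

definition shortest_path :: "'a set \<Rightarrow> ('a \<Rightarrow> 'a \<Rightarrow> bool) \<Rightarrow> 'a list \<Rightarrow> 'a \<Rightarrow> 'a \<Rightarrow> bool" where
  "shortest_path V E p u v \<longleftrightarrow> is_path V E p u v \<and> length p = Suc (gdist V E u v)"

definition condorcet_winner :: "'a set \<Rightarrow> ('a \<Rightarrow> 'a \<Rightarrow> bool) \<Rightarrow> 'a set \<Rightarrow> 'a \<Rightarrow> bool" where
  "condorcet_winner V E S c \<longleftrightarrow> c \<in> V \<and>
     (\<forall>y'\<in>V. y' \<noteq> c \<longrightarrow>
        card {u\<in>S. gdist V E u c < gdist V E u y'} > card {u\<in>S. gdist V E u y' < gdist V E u c})"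

end

theory Submission
  imports Defs
begin

text \<open>Suppose \<open>c\<close> were not on a geodesic from \<open>x\<close> to \<open>y\<close>, i.e.
  \<open>d(x,c) + d(c,y) > d(x,y)\<close>. If \<open>d(x,c) \<le> d(x,y)\<close>, the vertex \<open>y'\<close> at distance \<open>d(x,c)\<close>
  from \<open>x\<close> on a shortest \<open>x\<close>--\<open>y\<close> path ties with \<open>c\<close> for \<open>x\<close> and is strictly preferred by \<open>y\<close>;
  symmetrically with \<open>x\<close> and \<open>y\<close> exchanged. Otherwise both \<open>x\<close> and \<open>y\<close> are closer to \<open>x\<close>
  than to \<open>c\<close>. In every case at most \<open>z\<close> strictly prefers \<open>c\<close> while some voter strictly
  prefers the rival, so \<open>c\<close> does not win the pairwise comparison.\<close>

lemma is_path_endpoints: "is_path V E p u v \<Longrightarrow> u \<in> V \<and> v \<in> V"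
  unfolding is_path_def by (metis hd_in_set last_in_set subsetD)

lemma gdist_le_length: "is_path V E p u v \<Longrightarrow> gdist V E u v \<le> length p - 1"
  unfolding gdist_def is_path_def by (intro Least_le) (metis Suc_pred' length_greater_0_conv)

lemma gdist_self: "u \<in> V \<Longrightarrow> gdist V E u u = 0"
  using gdist_le_length[of V E "[u]"] by (simp add: is_path_def)

lemma shortest_path_exists_if_path:
  assumes "is_path V E p u v"
  shows "\<exists>q. shortest_path V E q u v"
proof -
  have "\<exists>n q. is_path V E q u v \<and> length q = Suc n"
    using assms by (metis Suc_pred' is_path_def length_greater_0_conv)
  then show ?thesis
    unfolding shortest_path_def gdist_def by (rule LeastI_ex)
qed

lemma is_path_Cons_Cons:
  "is_path V E (u # w # p) u' v \<longleftrightarrow> u' = u \<and> u \<in> V \<and> E u w \<and> is_path V E (w # p) w v"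
  unfolding is_path_def by (auto simp: nth_Cons split: nat.splits)

lemma is_path_append:
  "is_path V E p u v \<Longrightarrow> is_path V E q v w \<Longrightarrow> is_path V E (p @ tl q) u w"
proof (induction p arbitrary: u)
  case Nil
  then show ?case by (simp add: is_path_def)
next
  case (Cons a p)
  show ?case
  proof (cases p)
    case Nil
    with Cons.prems show ?thesis by (cases q) (auto simp: is_path_def)
  next
    case (Cons b p')
    with Cons.prems Cons.IH[of b] show ?thesis by (auto simp: is_path_Cons_Cons)
  qed
qed

lemma is_path_take:
  "is_path V E p u v \<Longrightarrow> k < length p \<Longrightarrow> is_path V E (take (Suc k) p) u (p ! k)"
  unfolding is_path_def by (auto simp: last_conv_nth hd_take dest: in_set_takeD)

lemma is_path_drop:
  "is_path V E p u v \<Longrightarrow> k < length p \<Longrightarrow> is_path V E (drop k p) (p ! k) v"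
  unfolding is_path_def by (auto simp: hd_drop_conv_nth dest: in_set_dropD)

lemma is_path_rev:
  assumes "symp E" and p: "is_path V E p u v"
  shows "is_path V E (rev p) v u"
  unfolding is_path_def
proof (intro conjI allI impI)
  fix i assume i: "Suc i < length (rev p)"
  have "Suc (length p - Suc (Suc i)) = length p - Suc i" using i by auto
  moreover have "E (p ! (length p - Suc (Suc i))) (p ! Suc (length p - Suc (Suc i)))"
    using p i unfolding is_path_def by auto
  ultimately show "E (rev p ! i) (rev p ! Suc i)"
    using i \<open>symp E\<close> by (auto simp: rev_nth dest: sympD)
qed (use p in \<open>auto simp: is_path_def hd_rev last_rev\<close>)

lemma gdist_commute:
  assumes "symp E"
  shows "gdist V E u v = gdist V E v u"
proof -
  have "(\<exists>p. is_path V E p u v \<and> length p = Suc n) \<longleftrightarrow> (\<exists>p. is_path V E p v u \<and> length p = Suc n)"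
    for n using is_path_rev[OF assms] by (metis length_rev rev_rev_ident)
  then show ?thesis unfolding gdist_def by simp
qed

lemma graph_symp: "graph V E \<Longrightarrow> symp E"
  unfolding graph_def symp_def by blast

context
  fixes V :: "'a set" and E :: "'a \<Rightarrow> 'a \<Rightarrow> bool"
  assumes graph: "graph V E" and connected: "connected_graph V E"
begin

lemma shortest_path_exists: "u \<in> V \<Longrightarrow> v \<in> V \<Longrightarrow> \<exists>p. shortest_path V E p u v"
  using connected shortest_path_exists_if_path[of V E] unfolding connected_graph_def by meson

lemma gdist_triangle:
  assumes "u \<in> V" "v \<in> V" "w \<in> V"
  shows "gdist V E u w \<le> gdist V E u v + gdist V E v w"
proof -
  obtain p q where "shortest_path V E p u v" "shortest_path V E q v w"
    using shortest_path_exists assms by meson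
  then show ?thesis
    using gdist_le_length[OF is_path_append] unfolding shortest_path_def by fastforce
qed

lemma shortest_path_nth_gdist:
  assumes p: "shortest_path V E p x y" and k: "k \<le> gdist V E x y"
  shows "p ! k \<in> V \<and> gdist V E x (p ! k) = k \<and> gdist V E (p ! k) y = gdist V E x y - k"
proof -
  have path: "is_path V E p x y" and len: "length p = Suc (gdist V E x y)"
    using p unfolding shortest_path_def by auto
  have kl: "k < length p" using len k by simp
  have in_V: "x \<in> V" "y \<in> V" "p ! k \<in> V"
    using is_path_endpoints[OF path] is_path_endpoints[OF is_path_drop[OF path kl]] by auto
  have "gdist V E x (p ! k) \<le> k"
    using gdist_le_length[OF is_path_take[OF path kl]] kl by simp
  moreover have "gdist V E (p ! k) y \<le> gdist V E x y - k"
    using gdist_le_length[OF is_path_drop[OF path kl]] len by simp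
  moreover have "gdist V E x y \<le> gdist V E x (p ! k) + gdist V E (p ! k) y"
    using gdist_triangle[OF in_V(1,3,2)] .
  ultimately show ?thesis using in_V k by linarith
qed

lemma shortest_path_through:
  assumes "x \<in> V" "y \<in> V" "c \<in> V" and geodesic: "gdist V E x c + gdist V E c y = gdist V E x y"
  shows "\<exists>p. shortest_path V E p x y \<and> c \<in> set p"
proof -
  obtain p q where p: "shortest_path V E p x c" and q: "shortest_path V E q c y"
    using shortest_path_exists assms by meson
  have "c \<in> set p" using p unfolding shortest_path_def is_path_def by (metis last_in_set)
  then show ?thesis
    using is_path_append p q geodesic unfolding shortest_path_def
    by (intro exI[of _ "p @ tl q"]) auto
qed

end

lemma not_condorcet_winner_if_rival_preferred:
  assumes rival: "y' \<in> V" "y' \<noteq> c"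
    and x_weakly: "gdist V E x y' \<le> gdist V E x c" and y_strictly: "gdist V E y y' < gdist V E y c"
  shows "\<not> condorcet_winner V E {x, y, z} c"
proof
  assume "condorcet_winner V E {x, y, z} c"
  then have beats: "card {u \<in> {x, y, z}. gdist V E u y' < gdist V E u c}
      < card {u \<in> {x, y, z}. gdist V E u c < gdist V E u y'}"
    using rival unfolding condorcet_winner_def by blast
  have "{u \<in> {x, y, z}. gdist V E u c < gdist V E u y'} \<subseteq> {z}"
    using x_weakly y_strictly by auto
  from card_mono[OF _ this]
  have "card {u \<in> {x, y, z}. gdist V E u c < gdist V E u y'} \<le> 1" by simp
  moreover have "y \<in> {u \<in> {x, y, z}. gdist V E u y' < gdist V E u c}"
    using y_strictly by simp
  then have "card {u \<in> {x, y, z}. gdist V E u y' < gdist V E u c} > 0"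
    by (intro card_gt_0_iff[THEN iffD2]) auto
  ultimately show False using beats by linarith
qed

lemma condorcet_winner_on_geodesic_if_near:
  assumes graph: "graph V E" and connected: "connected_graph V E"
    and V: "x \<in> V" "y \<in> V" and winner: "condorcet_winner V E {x, y, z} c"
    and near: "gdist V E x c \<le> gdist V E x y"
  shows "gdist V E x c + gdist V E c y = gdist V E x y"
proof (rule ccontr)
  let ?d = "gdist V E"
  assume off: "?d x c + ?d c y \<noteq> ?d x y"
  have c: "c \<in> V" using winner unfolding condorcet_winner_def by blast
  have d_commute: "?d u v = ?d v u" for u v using gdist_commute[OF graph_symp[OF graph]] .
  obtain p where p: "shortest_path V E p x y"
    using shortest_path_exists[OF graph connected V] by blast
  define y' where "y' = p ! ?d x c"
  have y': "y' \<in> V" "?d x y' = ?d x c" "?d y y' = ?d x y - ?d x c"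
    using shortest_path_nth_gdist[OF graph connected p near] d_commute unfolding y'_def by auto
  have "?d x y \<le> ?d x c + ?d c y" using gdist_triangle[OF graph connected V(1) c V(2)] .
  then have closer: "?d y y' < ?d y c" using y'(3) off near d_commute[of y c] by linarith
  then have "y' \<noteq> c" by blast
  from not_condorcet_winner_if_rival_preferred[OF y'(1) this _ closer] y'(2) winner
  show False by simp
qed

lemma condorcet_winner_on_geodesic:
  assumes graph: "graph V E" and connected: "connected_graph V E"
    and V: "x \<in> V" "y \<in> V" and winner: "condorcet_winner V E {x, y, z} c"
  shows "gdist V E x c + gdist V E c y = gdist V E x y"
proof -
  let ?d = "gdist V E"
  have d_commute: "?d u v = ?d v u" for u v using gdist_commute[OF graph_symp[OF graph]] .
  consider "?d x c \<le> ?d x y" | "?d y c \<le> ?d y x" | "?d x y < ?d x c" "?d x y < ?d y c"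
    using d_commute[of x y] by linarith
  then show ?thesis
  proof cases
    case 1
    then show ?thesis by (rule condorcet_winner_on_geodesic_if_near[OF graph connected V winner])
  next
    case 2
    have "condorcet_winner V E {y, x, z} c" using winner by (simp add: insert_commute)
    from condorcet_winner_on_geodesic_if_near[OF graph connected V(2,1) this 2]
    show ?thesis using d_commute[of c x] d_commute[of y c] d_commute[of y x] by simp
  next
    case 3
    have "x \<noteq> c" using 3 gdist_self[OF V(1)] by auto
    moreover have "?d x x \<le> ?d x c" using gdist_self[OF V(1)] by simp
    moreover have "?d y x < ?d y c" using 3 d_commute[of x y] by simp
    ultimately have "\<not> condorcet_winner V E {x, y, z} c"
      using not_condorcet_winner_if_rival_preferred[OF V(1)] by blast
    then show ?thesis using winner by contradiction
  qed
qed

theorem lemmaE1: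
  fixes V :: "'a set" and E :: "'a \<Rightarrow> 'a \<Rightarrow> bool" and x y z c :: 'a
  assumes "graph V E" and "connected_graph V E"
    and "x \<in> V" and "y \<in> V" and "z \<in> V"
    and "condorcet_winner V E {x, y, z} c"
  shows "(\<exists>p. shortest_path V E p x y \<and> c \<in> set p)
       \<and> (\<exists>p. shortest_path V E p x z \<and> c \<in> set p)
       \<and> (\<exists>p. shortest_path V E p y z \<and> c \<in> set p)"
proof -
  note through = shortest_path_through[OF assms(1,2)]
  note geodesic = condorcet_winner_on_geodesic[OF assms(1,2)]
  have c: "c \<in> V" using assms(6) unfolding condorcet_winner_def by blast
  have "condorcet_winner V E {x, z, y} c" "condorcet_winner V E {y, z, x} c"
    using assms(6) by (simp_all add: insert_commute)
  with assms(3-6) show ?thesis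
    using through[OF _ _ c geodesic] by simp
qed

end
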